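(* Let $\mathcal T$ and $\mathcal S$ be triangulated categories and let $T:\mathcal S\to\mathcal T$ be a triangle functor. Suppose $T$ has a left (respectively right) adjoint $S$. Let $M$ be an object of $\mathcal S$. Then the following are equivalent: (1) $M$ is $T$-relative projective (respectively injective); (2) $M$ is in $\mathrm{add}(\mathrm{im}(S))$; (3) $M$ is a direct factor of $S(L)$ for some object $L$ of $\mathcal T$; (4) $M$ is a direct factor of $ST(M)$.
   Context: An object $Q$ of $\mathcal S$ is $T$-relative projective if the natural transformation $\mathcal S(Q,-)\to\mathcal T(TQ,T-)$ induced by $T$ is injective, and $T$-relative injective if the natural transformation $\mathcal S(-,Q)\to\mathcal T(T-,TQ)$ induced by $T$ is injective. $\mathrm{add}(\mathrm{im}(S))$ is the full subcategory of direct summands of finite direct sums of objects in the image of $S$. *)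

theory Defs
  imports Main
begin

text \<open>A category is given by a set of objects, hom-sets (sets of elements of a
morphism type), a total composition operation (only used on composable arrows;
comp g f means g after f), and identities.\<close>

record ('o,'m) precat =
  Obj  :: "'o set"
  Hom  :: "'o \<Rightarrow> 'o \<Rightarrow> 'm set"
  comp :: "'m \<Rightarrow> 'm \<Rightarrow> 'm"
  idm  :: "'o \<Rightarrow> 'm"
  madd :: "'m \<Rightarrow> 'm \<Rightarrow> 'm"
  mzero :: "'o \<Rightarrow> 'o \<Rightarrow> 'm"
  mneg :: "'m \<Rightarrow> 'm"

record ('o,'m) tricat = "('o,'m) precat" +
  shO  :: "'o \<Rightarrow> 'o"
  shM  :: "'m \<Rightarrow> 'm"
  dist :: "('o \<times> 'o \<times> 'o \<times> 'm \<times> 'm \<times> 'm) set"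

record ('a,'b,'c,'d) fnct =
  fo :: "'a \<Rightarrow> 'c"
  fm :: "'b \<Rightarrow> 'd"

definition category :: "('o,'m,'x) precat_scheme \<Rightarrow> bool" where
  "category C \<longleftrightarrow>
     (\<forall>a\<in>Obj C. idm C a \<in> Hom C a a) \<and>
     (\<forall>a\<in>Obj C. \<forall>b\<in>Obj C. \<forall>c\<in>Obj C. \<forall>f\<in>Hom C a b. \<forall>g\<in>Hom C b c.
        comp C g f \<in> Hom C a c) \<and>
     (\<forall>a\<in>Obj C. \<forall>b\<in>Obj C. \<forall>f\<in>Hom C a b.
        comp C (idm C b) f = f \<and> comp C f (idm C a) = f) \<and>
     (\<forall>a\<in>Obj C. \<forall>b\<in>Obj C. \<forall>c\<in>Obj C. \<forall>d\<in>Obj C.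
      \<forall>f\<in>Hom C a b. \<forall>g\<in>Hom C b c. \<forall>h\<in>Hom C c d.
        comp C h (comp C g f) = comp C (comp C h g) f)"

definition preadditive :: "('o,'m,'x) precat_scheme \<Rightarrow> bool" where
  "preadditive C \<longleftrightarrow> category C \<and>
     (\<forall>a\<in>Obj C. \<forall>b\<in>Obj C.
        mzero C a b \<in> Hom C a b \<and>
        (\<forall>f\<in>Hom C a b. \<forall>g\<in>Hom C a b. madd C f g \<in> Hom C a b) \<and>
        (\<forall>f\<in>Hom C a b. mneg C f \<in> Hom C a b) \<and>
        (\<forall>f\<in>Hom C a b. \<forall>g\<in>Hom C a b. \<forall>h\<in>Hom C a b.
            madd C (madd C f g) h = madd C f (madd C g h)) \<and>
        (\<forall>f\<in>Hom C a b. \<forall>g\<in>Hom C a b. madd C f g = madd C g f) \<and>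
        (\<forall>f\<in>Hom C a b. madd C f (mzero C a b) = f) \<and>
        (\<forall>f\<in>Hom C a b. madd C f (mneg C f) = mzero C a b)) \<and>
     (\<forall>a\<in>Obj C. \<forall>b\<in>Obj C. \<forall>c\<in>Obj C. \<forall>f\<in>Hom C a b. \<forall>f'\<in>Hom C a b.
      \<forall>g\<in>Hom C b c. \<forall>g'\<in>Hom C b c.
        comp C (madd C g g') f = madd C (comp C g f) (comp C g' f) \<and>
        comp C g (madd C f f') = madd C (comp C g f) (comp C g f'))"

definition biprod :: "('o,'m,'x) precat_scheme \<Rightarrow> 'o \<Rightarrow> 'o \<Rightarrow> 'o \<Rightarrow>
    'm \<Rightarrow> 'm \<Rightarrow> 'm \<Rightarrow> 'm \<Rightarrow> bool" where
  "biprod C X A B i p j q \<longleftrightarrow>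
     X \<in> Obj C \<and> A \<in> Obj C \<and> B \<in> Obj C \<and>
     i \<in> Hom C A X \<and> p \<in> Hom C X A \<and> j \<in> Hom C B X \<and> q \<in> Hom C X B \<and>
     comp C p i = idm C A \<and> comp C q j = idm C B \<and>
     comp C p j = mzero C B A \<and> comp C q i = mzero C A B \<and>
     madd C (comp C i p) (comp C j q) = idm C X"

definition additive :: "('o,'m,'x) precat_scheme \<Rightarrow> bool" where
  "additive C \<longleftrightarrow> preadditive C \<and>
     (\<exists>z\<in>Obj C. idm C z = mzero C z z) \<and>
     (\<forall>a\<in>Obj C. \<forall>b\<in>Obj C. \<exists>X i p j q. biprod C X a b i p j q)"

definition iso :: "('o,'m,'x) precat_scheme \<Rightarrow> 'm \<Rightarrow> 'o \<Rightarrow> 'o \<Rightarrow> bool" where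
  "iso C f a b \<longleftrightarrow> f \<in> Hom C a b \<and>
     (\<exists>g\<in>Hom C b a. comp C g f = idm C a \<and> comp C f g = idm C b)"

definition is_functor :: "('a,'b,'x) precat_scheme \<Rightarrow> ('c,'d,'y) precat_scheme \<Rightarrow>
    ('a,'b,'c,'d) fnct \<Rightarrow> bool" where
  "is_functor C D F \<longleftrightarrow>
     (\<forall>a\<in>Obj C. fo F a \<in> Obj D) \<and>
     (\<forall>a\<in>Obj C. \<forall>b\<in>Obj C. \<forall>f\<in>Hom C a b. fm F f \<in> Hom D (fo F a) (fo F b)) \<and>
     (\<forall>a\<in>Obj C. fm F (idm C a) = idm D (fo F a)) \<and>
     (\<forall>a\<in>Obj C. \<forall>b\<in>Obj C. \<forall>c\<in>Obj C. \<forall>f\<in>Hom C a b. \<forall>g\<in>Hom C b c.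
        fm F (comp C g f) = comp D (fm F g) (fm F f))"

definition additive_functor :: "('a,'b,'x) precat_scheme \<Rightarrow> ('c,'d,'y) precat_scheme \<Rightarrow>
    ('a,'b,'c,'d) fnct \<Rightarrow> bool" where
  "additive_functor C D F \<longleftrightarrow> is_functor C D F \<and>
     (\<forall>a\<in>Obj C. \<forall>b\<in>Obj C. \<forall>f\<in>Hom C a b. \<forall>g\<in>Hom C a b.
        fm F (madd C f g) = madd D (fm F f) (fm F g))"

definition shiftF :: "('o,'m,'x) tricat_scheme \<Rightarrow> ('o,'m,'o,'m) fnct" where
  "shiftF C = \<lparr>fo = shO C, fm = shM C\<rparr>"

definition is_triangle :: "('o,'m,'x) tricat_scheme \<Rightarrow>
    'o \<times> 'o \<times> 'o \<times> 'm \<times> 'm \<times> 'm \<Rightarrow> bool" where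
  "is_triangle C t = (case t of (X,Y,Z,f,g,h) \<Rightarrow>
     X \<in> Obj C \<and> Y \<in> Obj C \<and> Z \<in> Obj C \<and>
     f \<in> Hom C X Y \<and> g \<in> Hom C Y Z \<and> h \<in> Hom C Z (shO C X))"

text \<open>Triangulated category (Verdier's axioms TR1--TR4, octahedral axiom in the
form of the Stacks project, Tag 05QK); the shift is an additive auto-equivalence.\<close>
definition triangulated :: "('o,'m,'x) tricat_scheme \<Rightarrow> bool" where
  "triangulated C \<longleftrightarrow> additive C \<and>
     additive_functor C C (shiftF C) \<and>
     (\<forall>a\<in>Obj C. \<forall>b\<in>Obj C. bij_betw (shM C) (Hom C a b) (Hom C (shO C a) (shO C b))) \<and>
     (\<forall>b\<in>Obj C. \<exists>a\<in>Obj C. \<exists>f. iso C f (shO C a) b) \<and>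
     (\<forall>t\<in>dist C. is_triangle C t) \<and>
     \<comment> \<open>closed under isomorphisms of triangles\<close>
     (\<forall>X Y Z f g h X' Y' Z' f' g' h' u v w.
        (X,Y,Z,f,g,h) \<in> dist C \<longrightarrow> is_triangle C (X',Y',Z',f',g',h') \<longrightarrow>
        iso C u X X' \<longrightarrow> iso C v Y Y' \<longrightarrow> iso C w Z Z' \<longrightarrow>
        comp C v f = comp C f' u \<longrightarrow> comp C w g = comp C g' v \<longrightarrow>
        comp C (shM C u) h = comp C h' w \<longrightarrow>
        (X',Y',Z',f',g',h') \<in> dist C) \<and>
     \<comment> \<open>TR1\<close>
     (\<forall>X\<in>Obj C. \<forall>z\<in>Obj C. idm C z = mzero C z z \<longrightarrow>
        (X, X, z, idm C X, mzero C X z, mzero C z (shO C X)) \<in> dist C) \<and>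
     (\<forall>X\<in>Obj C. \<forall>Y\<in>Obj C. \<forall>f\<in>Hom C X Y. \<exists>Z g h. (X,Y,Z,f,g,h) \<in> dist C) \<and>
     \<comment> \<open>TR2 (rotation)\<close>
     (\<forall>X Y Z f g h. is_triangle C (X,Y,Z,f,g,h) \<longrightarrow>
        ((X,Y,Z,f,g,h) \<in> dist C \<longleftrightarrow>
         (Y, Z, shO C X, g, h, mneg C (shM C f)) \<in> dist C)) \<and>
     \<comment> \<open>TR3 (morphisms of triangles)\<close>
     (\<forall>X Y Z f g h X' Y' Z' f' g' h' u v.
        (X,Y,Z,f,g,h) \<in> dist C \<longrightarrow> (X',Y',Z',f',g',h') \<in> dist C \<longrightarrow>
        u \<in> Hom C X X' \<longrightarrow> v \<in> Hom C Y Y' \<longrightarrow> comp C v f = comp C f' u \<longrightarrow>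
        (\<exists>w\<in>Hom C Z Z'. comp C w g = comp C g' v \<and>
                          comp C (shM C u) h = comp C h' w)) \<and>
     \<comment> \<open>TR4 (octahedral axiom)\<close>
     (\<forall>X Y Z f g Q1 p1 d1 Q2 p2 d2 Q3 p3 d3.
        f \<in> Hom C X Y \<longrightarrow> g \<in> Hom C Y Z \<longrightarrow>
        (X,Y,Q1,f,p1,d1) \<in> dist C \<longrightarrow>
        (X,Z,Q2,comp C g f,p2,d2) \<in> dist C \<longrightarrow>
        (Y,Z,Q3,g,p3,d3) \<in> dist C \<longrightarrow>
        (\<exists>a\<in>Hom C Q1 Q2. \<exists>b\<in>Hom C Q2 Q3.
           (Q1,Q2,Q3,a,b,comp C (shM C p1) d3) \<in> dist C \<and>
           comp C a p1 = comp C p2 g \<and> comp C d2 a = d1 \<and>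
           comp C b p2 = p3 \<and> comp C d3 b = comp C (shM C f) d2))"

definition triangle_functor :: "('a,'b,'x) tricat_scheme \<Rightarrow> ('c,'d,'y) tricat_scheme \<Rightarrow>
    ('a,'b,'c,'d) fnct \<Rightarrow> bool" where
  "triangle_functor C D F \<longleftrightarrow> additive_functor C D F \<and>
     (\<exists>\<phi>. (\<forall>X\<in>Obj C. iso D (\<phi> X) (fo F (shO C X)) (shO D (fo F X))) \<and>
          (\<forall>X\<in>Obj C. \<forall>Y\<in>Obj C. \<forall>f\<in>Hom C X Y.
             comp D (\<phi> Y) (fm F (shM C f)) = comp D (shM D (fm F f)) (\<phi> X)) \<and>
          (\<forall>X Y Z f g h. (X,Y,Z,f,g,h) \<in> dist C \<longrightarrow>
             (fo F X, fo F Y, fo F Z, fm F f, fm F g, comp D (\<phi> X) (fm F h)) \<in> dist D))"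

text \<open>adjunction C D F G : F : C -> D is left adjoint to G : D -> C
(unit/counit with the triangle identities).\<close>
definition adjunction :: "('a,'b,'x) precat_scheme \<Rightarrow> ('c,'d,'y) precat_scheme \<Rightarrow>
    ('a,'b,'c,'d) fnct \<Rightarrow> ('c,'d,'a,'b) fnct \<Rightarrow> bool" where
  "adjunction C D F G \<longleftrightarrow> is_functor C D F \<and> is_functor D C G \<and>
     (\<exists>\<eta> \<epsilon>.
        (\<forall>X\<in>Obj C. \<eta> X \<in> Hom C X (fo G (fo F X))) \<and>
        (\<forall>X\<in>Obj C. \<forall>Y\<in>Obj C. \<forall>f\<in>Hom C X Y.
            comp C (\<eta> Y) f = comp C (fm G (fm F f)) (\<eta> X)) \<and>
        (\<forall>Y\<in>Obj D. \<epsilon> Y \<in> Hom D (fo F (fo G Y)) Y) \<and>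
        (\<forall>X\<in>Obj D. \<forall>Y\<in>Obj D. \<forall>g\<in>Hom D X Y.
            comp D g (\<epsilon> X) = comp D (\<epsilon> Y) (fm F (fm G g))) \<and>
        (\<forall>X\<in>Obj C. comp D (\<epsilon> (fo F X)) (fm F (\<eta> X)) = idm D (fo F X)) \<and>
        (\<forall>Y\<in>Obj D. comp C (fm G (\<epsilon> Y)) (\<eta> (fo G Y)) = idm C (fo G Y)))"

text \<open>T-relative projective / injective: the transformations S(Q,-) -> T(TQ,T-)
resp. S(-,Q) -> T(T-,TQ) induced by T are injective (componentwise).\<close>
definition rel_projective :: "('a,'b,'x) precat_scheme \<Rightarrow> ('a,'b,'c,'d) fnct \<Rightarrow> 'a \<Rightarrow> bool" where
  "rel_projective C F Q \<longleftrightarrow> (\<forall>Y\<in>Obj C. inj_on (fm F) (Hom C Q Y))"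

definition rel_injective :: "('a,'b,'x) precat_scheme \<Rightarrow> ('a,'b,'c,'d) fnct \<Rightarrow> 'a \<Rightarrow> bool" where
  "rel_injective C F Q \<longleftrightarrow> (\<forall>Y\<in>Obj C. inj_on (fm F) (Hom C Y Q))"

definition direct_factor :: "('o,'m,'x) precat_scheme \<Rightarrow> 'o \<Rightarrow> 'o \<Rightarrow> bool" where
  "direct_factor C M X \<longleftrightarrow> (\<exists>N i p j q. biprod C X M N i p j q)"

fun hsum :: "('o,'m,'x) precat_scheme \<Rightarrow> 'o \<Rightarrow> 'o \<Rightarrow> (nat \<Rightarrow> 'm) \<Rightarrow> nat \<Rightarrow> 'm" where
  "hsum C a b f 0 = mzero C a b"
| "hsum C a b f (Suc n) = madd C (hsum C a b f n) (f n)"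

definition is_dsum :: "('o,'m,'x) precat_scheme \<Rightarrow> 'o \<Rightarrow> (nat \<Rightarrow> 'o) \<Rightarrow> nat \<Rightarrow>
    (nat \<Rightarrow> 'm) \<Rightarrow> (nat \<Rightarrow> 'm) \<Rightarrow> bool" where
  "is_dsum C X A n \<iota> \<pi> \<longleftrightarrow> X \<in> Obj C \<and>
     (\<forall>k<n. A k \<in> Obj C \<and> \<iota> k \<in> Hom C (A k) X \<and> \<pi> k \<in> Hom C X (A k)) \<and>
     (\<forall>k<n. \<forall>l<n. comp C (\<pi> k) (\<iota> l) =
                   (if k = l then idm C (A k) else mzero C (A l) (A k))) \<and>
     hsum C X X (\<lambda>k. comp C (\<iota> k) (\<pi> k)) n = idm C X"

definition in_add_im :: "('c,'d,'y) precat_scheme \<Rightarrow> ('a,'b,'x) precat_scheme \<Rightarrow>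
    ('c,'d,'a,'b) fnct \<Rightarrow> 'a \<Rightarrow> bool" where
  "in_add_im D C F M \<longleftrightarrow>
     (\<exists>n L X \<iota> \<pi>. (\<forall>k<n. L k \<in> Obj D) \<and>
        is_dsum C X (\<lambda>k. fo F (L k)) n \<iota> \<pi> \<and> direct_factor C M X)"

end

theory Submission
  imports Defs
begin

(* (1) \<Longrightarrow> (4): for the counit \<epsilon> : STM \<rightarrow> M a triangle identity makes T \<epsilon> a split epimorphism.
   If g : M \<rightarrow> Z completes \<epsilon> to a distinguished triangle, then T g \<circ> T \<epsilon> = 0 forces T g = 0,
   so g = 0 by relative projectivity, and \<epsilon> is a split epimorphism because it is a weak kernel
   of g. In a triangulated category every split monomorphism splits off a direct summand, so M is
   a direct factor of STM.
   (4) \<Longrightarrow> (3) \<Longrightarrow> (2) are immediate.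
   (2) \<Longrightarrow> (1): T is injective on morphisms out of S L, because \<psi> is recovered from T \<psi> through the
   adjunction, and this injectivity passes to finite direct sums and to their direct summands.
   The injective case is dual: (1) \<Longrightarrow> (4) uses the unit and a triangle ending in it, and
   (2) \<Longrightarrow> (1) is the projective case in the opposite categories. *)

section \<open>Categories and preadditive categories\<close>

locale cat =
  fixes C :: "('o,'m,'x) precat_scheme"
  assumes category: "category C"
begin

lemma id_hom: "a \<in> Obj C \<Longrightarrow> idm C a \<in> Hom C a a"
  using category by (simp add: category_def)

lemma comp_hom:
  "\<lbrakk>a \<in> Obj C; b \<in> Obj C; c \<in> Obj C; f \<in> Hom C a b; g \<in> Hom C b c\<rbrakk>
    \<Longrightarrow> comp C g f \<in> Hom C a c"
  using category unfolding category_def by blast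

lemma comp_id_left: "\<lbrakk>a \<in> Obj C; b \<in> Obj C; f \<in> Hom C a b\<rbrakk> \<Longrightarrow> comp C (idm C b) f = f"
  using category unfolding category_def by blast

lemma comp_id_right: "\<lbrakk>a \<in> Obj C; b \<in> Obj C; f \<in> Hom C a b\<rbrakk> \<Longrightarrow> comp C f (idm C a) = f"
  using category unfolding category_def by blast

lemma comp_assoc:
  "\<lbrakk>a \<in> Obj C; b \<in> Obj C; c \<in> Obj C; d \<in> Obj C; f \<in> Hom C a b; g \<in> Hom C b c; h \<in> Hom C c d\<rbrakk>
    \<Longrightarrow> comp C h (comp C g f) = comp C (comp C h g) f"
  using category unfolding category_def by blast

lemma iso_id: "a \<in> Obj C \<Longrightarrow> iso C (idm C a) a a"
  unfolding iso_def using id_hom comp_id_left by blast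

lemma split_mono_cancel:
  assumes objs: "a \<in> Obj C" "b \<in> Obj C" "c \<in> Obj C"
    and s: "s \<in> Hom C b c" and p: "p \<in> Hom C c b" and ps: "comp C p s = idm C b"
    and u: "u \<in> Hom C a b" and v: "v \<in> Hom C a b" and eq: "comp C s u = comp C s v"
  shows "u = v"
proof -
  have "u = comp C (comp C p s) u"
    using objs u by (simp add: ps comp_id_left)
  also have "\<dots> = comp C (comp C p s) v"
    using objs s p u v eq by (simp add: comp_assoc [symmetric])
  also have "\<dots> = v"
    using objs v by (simp add: ps comp_id_left)
  finally show ?thesis .
qed

end

locale preadditive_cat =
  fixes C :: "('o,'m,'x) precat_scheme"
  assumes preadditive: "preadditive C"

sublocale preadditive_cat \<subseteq> cat
  using preadditive by unfold_locales (simp add: preadditive_def)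

lemma hsum_cong: "(\<forall>k<n. \<phi> k = \<psi> k) \<Longrightarrow> hsum C a b \<phi> n = hsum C a b \<psi> n"
  by (induction n) auto

context preadditive_cat
begin

context
  fixes a b assumes a: "a \<in> Obj C" and b: "b \<in> Obj C"
begin

lemma mzero_hom: "mzero C a b \<in> Hom C a b"
  using preadditive a b unfolding preadditive_def by blast

lemma madd_hom: "\<lbrakk>f \<in> Hom C a b; g \<in> Hom C a b\<rbrakk> \<Longrightarrow> madd C f g \<in> Hom C a b"
  using preadditive a b unfolding preadditive_def by blast

lemma mneg_hom: "f \<in> Hom C a b \<Longrightarrow> mneg C f \<in> Hom C a b"
  using preadditive a b unfolding preadditive_def by blast

lemma madd_assoc:
  "\<lbrakk>f \<in> Hom C a b; g \<in> Hom C a b; h \<in> Hom C a b\<rbrakk>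
    \<Longrightarrow> madd C (madd C f g) h = madd C f (madd C g h)"
  using preadditive a b unfolding preadditive_def by blast

lemma madd_commute: "\<lbrakk>f \<in> Hom C a b; g \<in> Hom C a b\<rbrakk> \<Longrightarrow> madd C f g = madd C g f"
  using preadditive a b unfolding preadditive_def by blast

lemma madd_mzero_right: "f \<in> Hom C a b \<Longrightarrow> madd C f (mzero C a b) = f"
  using preadditive a b unfolding preadditive_def by blast

lemma madd_mneg_right: "f \<in> Hom C a b \<Longrightarrow> madd C f (mneg C f) = mzero C a b"
  using preadditive a b unfolding preadditive_def by blast

lemma madd_mzero_left: "f \<in> Hom C a b \<Longrightarrow> madd C (mzero C a b) f = f"
  by (simp add: madd_commute [of "mzero C a b"] mzero_hom madd_mzero_right)

lemma madd_eq_right_imp_mzero: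
  assumes f: "f \<in> Hom C a b" and g: "g \<in> Hom C a b" and eq: "madd C f g = g"
  shows "f = mzero C a b"
proof -
  have "f = madd C f (madd C g (mneg C g))"
    using f g by (simp add: madd_mneg_right madd_mzero_right)
  also have "\<dots> = madd C (madd C f g) (mneg C g)"
    using f g by (simp add: madd_assoc mneg_hom)
  also have "\<dots> = madd C g (mneg C g)"
    using eq by simp
  finally show ?thesis
    using g by (simp add: madd_mneg_right)
qed

lemma mneg_unique:
  assumes f: "f \<in> Hom C a b" and g: "g \<in> Hom C a b" and sum: "madd C f g = mzero C a b"
  shows "g = mneg C f"
proof -
  have "g = madd C (madd C g f) (mneg C f)"
    using f g by (simp add: madd_assoc mneg_hom madd_mneg_right madd_mzero_right)
  also have "\<dots> = mneg C f"
    using f g sum by (simp add: madd_commute mneg_hom madd_mzero_left)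
  finally show ?thesis .
qed

lemma mneg_mneg: "f \<in> Hom C a b \<Longrightarrow> mneg C (mneg C f) = f"
  by (rule mneg_unique [symmetric])
    (simp_all add: mneg_hom madd_commute [of "mneg C f"] madd_mneg_right)

lemma mneg_inj: "\<lbrakk>f \<in> Hom C a b; g \<in> Hom C a b; mneg C f = mneg C g\<rbrakk> \<Longrightarrow> f = g"
  by (metis mneg_mneg)

lemma mneg_mzero: "mneg C (mzero C a b) = mzero C a b"
  by (rule mneg_unique [symmetric]) (simp_all add: mzero_hom madd_mzero_right)

lemma mneg_eq_mzero_iff: "f \<in> Hom C a b \<Longrightarrow> mneg C f = mzero C a b \<longleftrightarrow> f = mzero C a b"
  using mneg_mneg mneg_mzero by metis

lemma madd_mneg_cancel:
  "\<lbrakk>f \<in> Hom C a b; g \<in> Hom C a b\<rbrakk> \<Longrightarrow> madd C (madd C f (mneg C g)) g = f"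
  by (simp add: madd_assoc mneg_hom madd_commute [of "mneg C g"] madd_mneg_right madd_mzero_right)

end

context
  fixes a b c assumes a: "a \<in> Obj C" and b: "b \<in> Obj C" and c: "c \<in> Obj C"
begin

lemma madd_comp:
  "\<lbrakk>f \<in> Hom C a b; g \<in> Hom C b c; g' \<in> Hom C b c\<rbrakk>
    \<Longrightarrow> comp C (madd C g g') f = madd C (comp C g f) (comp C g' f)"
  using preadditive a b c unfolding preadditive_def by blast

lemma comp_madd:
  "\<lbrakk>f \<in> Hom C a b; f' \<in> Hom C a b; g \<in> Hom C b c\<rbrakk>
    \<Longrightarrow> comp C g (madd C f f') = madd C (comp C g f) (comp C g f')"
  using preadditive a b c unfolding preadditive_def by blast

lemma comp_mzero:
  assumes g: "g \<in> Hom C b c"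
  shows "comp C g (mzero C a b) = mzero C a c"
proof -
  have h: "comp C g (mzero C a b) \<in> Hom C a c"
    using a b c g by (blast intro: comp_hom mzero_hom)
  have "madd C (comp C g (mzero C a b)) (comp C g (mzero C a b)) = comp C g (mzero C a b)"
    using comp_madd [OF mzero_hom mzero_hom g] by (simp add: a b mzero_hom madd_mzero_right)
  then show ?thesis
    by (rule madd_eq_right_imp_mzero [OF a c h h])
qed

lemma mzero_comp:
  assumes f: "f \<in> Hom C a b"
  shows "comp C (mzero C b c) f = mzero C a c"
proof -
  have h: "comp C (mzero C b c) f \<in> Hom C a c"
    using a b c f by (blast intro: comp_hom mzero_hom)
  have "madd C (comp C (mzero C b c) f) (comp C (mzero C b c) f) = comp C (mzero C b c) f"
    using madd_comp [OF f mzero_hom mzero_hom] by (simp add: b c mzero_hom madd_mzero_right)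
  then show ?thesis
    by (rule madd_eq_right_imp_mzero [OF a c h h])
qed

lemma mneg_comp:
  assumes f: "f \<in> Hom C a b" and g: "g \<in> Hom C b c"
  shows "comp C (mneg C g) f = mneg C (comp C g f)"
proof (rule mneg_unique)
  show "madd C (comp C g f) (comp C (mneg C g) f) = mzero C a c"
    using a b c f g by (simp add: madd_comp [symmetric] mneg_hom madd_mneg_right mzero_comp)
qed (use a b c f g in \<open>auto intro: comp_hom mneg_hom\<close>)

lemma comp_mneg:
  assumes f: "f \<in> Hom C a b" and g: "g \<in> Hom C b c"
  shows "comp C g (mneg C f) = mneg C (comp C g f)"
proof (rule mneg_unique)
  show "madd C (comp C g f) (comp C g (mneg C f)) = mzero C a c"
    using a b c f g by (simp add: comp_madd [symmetric] mneg_hom madd_mneg_right comp_mzero)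
qed (use a b c f g in \<open>auto intro: comp_hom mneg_hom\<close>)

end

lemma biprodI_split_mono:
  assumes objs: "X \<in> Obj C" "M \<in> Obj C" "N \<in> Obj C"
    and s: "s \<in> Hom C M X" and p: "p \<in> Hom C X M" and ps: "comp C p s = idm C M"
    and r: "r \<in> Hom C X M" and j: "j \<in> Hom C N X" and g: "g \<in> Hom C X N"
    and gj: "comp C g j = idm C N" and gs: "comp C g s = mzero C M N"
    and sum: "madd C (comp C s r) (comp C j g) = idm C X"
  shows "biprod C X M N s r j g"
proof -
  note homs = comp_hom [OF objs(1,2,1) r s] comp_hom [OF objs(1,3,1) g j]
  have "s = comp C (madd C (comp C s r) (comp C j g)) s"
    using comp_id_left [OF objs(2,1) s] by (simp add: sum)
  also have "\<dots> = madd C (comp C (comp C s r) s) (comp C j (comp C g s))"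
    using madd_comp [OF objs(2,1,1) s homs] comp_assoc [OF objs(2,1,3,1) s g j] by simp
  also have "\<dots> = comp C s (comp C r s)"
    using comp_assoc [OF objs(2,1,2,1) s r s] comp_mzero [OF objs(2,3,1) j]
      madd_mzero_right [OF objs(2,1) comp_hom [OF objs(2,1,1) s homs(1)]] by (simp add: gs)
  finally have "comp C s (comp C r s) = comp C s (idm C M)"
    using comp_id_right [OF objs(2,1) s] by simp
  then have rs: "comp C r s = idm C M"
    by (rule split_mono_cancel [OF objs(2,2,1) s p ps comp_hom [OF objs(2,1,2) s r] id_hom [OF objs(2)]])
  have "j = comp C (madd C (comp C s r) (comp C j g)) j"
    using comp_id_left [OF objs(3,1) j] by (simp add: sum)
  also have "\<dots> = madd C (comp C s (comp C r j)) (comp C j (comp C g j))"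
    using madd_comp [OF objs(3,1,1) j homs] comp_assoc [OF objs(3,1,2,1) j r s]
      comp_assoc [OF objs(3,1,3,1) j g j] by simp
  also have "\<dots> = madd C (comp C s (comp C r j)) j"
    using comp_id_right [OF objs(3,1) j] by (simp add: gj)
  finally have "comp C s (comp C r j) = mzero C N X"
    by (intro madd_eq_right_imp_mzero [OF objs(3,1) _ j]
        comp_hom [OF objs(3,2,1) comp_hom [OF objs(3,1,2) j r] s]) simp
  then have "comp C s (comp C r j) = comp C s (mzero C N M)"
    using comp_mzero [OF objs(3,2,1) s] by simp
  then have rj: "comp C r j = mzero C N M"
    by (rule split_mono_cancel [OF objs(3,2,1) s p ps comp_hom [OF objs(3,1,2) j r] mzero_hom [OF objs(3,2)]])
  show ?thesis
    unfolding biprod_def using objs s r j g rs gj rj gs sum by simp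
qed

lemma hsum_hom:
  assumes "a \<in> Obj C" "b \<in> Obj C" "\<forall>k<n. \<phi> k \<in> Hom C a b"
  shows "hsum C a b \<phi> n \<in> Hom C a b"
  using assms by (induction n) (simp_all add: mzero_hom madd_hom)

lemma comp_hsum:
  assumes objs: "a \<in> Obj C" "b \<in> Obj C" "c \<in> Obj C"
    and g: "g \<in> Hom C b c" and \<phi>: "\<forall>k<n. \<phi> k \<in> Hom C a b"
  shows "comp C g (hsum C a b \<phi> n) = hsum C a c (\<lambda>k. comp C g (\<phi> k)) n"
  using \<phi>
proof (induction n)
  case 0
  then show ?case using objs g by (simp add: comp_mzero)
next
  case (Suc n)
  then show ?case using objs g by (simp add: comp_madd hsum_hom)
qed

lemma dsum_hom_ext:
  assumes ds: "is_dsum C X A n \<iota> \<pi>" and Y: "Y \<in> Obj C"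
    and g: "g \<in> Hom C X Y" and g': "g' \<in> Hom C X Y"
    and eq: "\<forall>k<n. comp C g (\<iota> k) = comp C g' (\<iota> k)"
  shows "g = g'"
proof -
  have X: "X \<in> Obj C" and summands: "\<forall>k<n. A k \<in> Obj C \<and> \<iota> k \<in> Hom C (A k) X \<and> \<pi> k \<in> Hom C X (A k)"
    and id: "hsum C X X (\<lambda>k. comp C (\<iota> k) (\<pi> k)) n = idm C X"
    using ds unfolding is_dsum_def by auto
  have expand: "h = hsum C X Y (\<lambda>k. comp C (comp C h (\<iota> k)) (\<pi> k)) n" if h: "h \<in> Hom C X Y" for h
  proof -
    have "h = comp C h (hsum C X X (\<lambda>k. comp C (\<iota> k) (\<pi> k)) n)"
      using X Y h by (simp add: id comp_id_right)
    also have "\<dots> = hsum C X Y (\<lambda>k. comp C h (comp C (\<iota> k) (\<pi> k))) n"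
      using X Y h summands by (intro comp_hsum) (auto intro: comp_hom)
    also have "\<dots> = hsum C X Y (\<lambda>k. comp C (comp C h (\<iota> k)) (\<pi> k)) n"
    proof (intro hsum_cong allI impI)
      fix k assume "k < n"
      then show "comp C h (comp C (\<iota> k) (\<pi> k)) = comp C (comp C h (\<iota> k)) (\<pi> k)"
        using X Y h summands comp_assoc [of X "A k" X Y "\<pi> k" "\<iota> k" h] by simp
    qed
    finally show ?thesis .
  qed
  have "hsum C X Y (\<lambda>k. comp C (comp C g (\<iota> k)) (\<pi> k)) n
      = hsum C X Y (\<lambda>k. comp C (comp C g' (\<iota> k)) (\<pi> k)) n"
    using eq by (intro hsum_cong) simp
  then show ?thesis
    using expand [OF g] expand [OF g'] by simp
qed

end

section \<open>Functors and adjunctions\<close>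

lemma
  assumes "is_functor C D F"
  shows functor_obj: "a \<in> Obj C \<Longrightarrow> fo F a \<in> Obj D"
    and functor_hom: "\<lbrakk>a \<in> Obj C; b \<in> Obj C; f \<in> Hom C a b\<rbrakk> \<Longrightarrow> fm F f \<in> Hom D (fo F a) (fo F b)"
    and functor_id: "a \<in> Obj C \<Longrightarrow> fm F (idm C a) = idm D (fo F a)"
    and functor_comp: "\<lbrakk>a \<in> Obj C; b \<in> Obj C; c \<in> Obj C; f \<in> Hom C a b; g \<in> Hom C b c\<rbrakk>
      \<Longrightarrow> fm F (comp C g f) = comp D (fm F g) (fm F f)"
  using assms unfolding is_functor_def by blast+

lemma additive_functor_mzero:
  assumes F: "additive_functor C D F" and "preadditive C" "preadditive D"
    and a: "a \<in> Obj C" and b: "b \<in> Obj C"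
  shows "fm F (mzero C a b) = mzero D (fo F a) (fo F b)"
proof -
  interpret C: preadditive_cat C by standard fact
  interpret D: preadditive_cat D by standard fact
  have F': "is_functor C D F"
    using F by (simp add: additive_functor_def)
  have z: "mzero C a b \<in> Hom C a b"
    by (rule C.mzero_hom [OF a b])
  have "madd D (fm F (mzero C a b)) (fm F (mzero C a b)) = fm F (mzero C a b)"
    using F a b z C.madd_mzero_right [OF a b z] unfolding additive_functor_def by metis
  then show ?thesis
    using D.madd_eq_right_imp_mzero functor_obj [OF F'] functor_hom [OF F' a b z] a b by blast
qed

lemma adjunctionE:
  assumes "adjunction C D F G"
  obtains \<eta> \<epsilon> where "is_functor C D F" "is_functor D C G"
    "\<forall>X\<in>Obj C. \<eta> X \<in> Hom C X (fo G (fo F X))"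
    "\<forall>X\<in>Obj C. \<forall>Y\<in>Obj C. \<forall>f\<in>Hom C X Y. comp C (\<eta> Y) f = comp C (fm G (fm F f)) (\<eta> X)"
    "\<forall>Y\<in>Obj D. \<epsilon> Y \<in> Hom D (fo F (fo G Y)) Y"
    "\<forall>X\<in>Obj D. \<forall>Y\<in>Obj D. \<forall>g\<in>Hom D X Y. comp D g (\<epsilon> X) = comp D (\<epsilon> Y) (fm F (fm G g))"
    "\<forall>X\<in>Obj C. comp D (\<epsilon> (fo F X)) (fm F (\<eta> X)) = idm D (fo F X)"
    "\<forall>Y\<in>Obj D. comp C (fm G (\<epsilon> Y)) (\<eta> (fo G Y)) = idm C (fo G Y)"
  using assms unfolding adjunction_def by blast

section \<open>Opposite categories\<close>

definition op_cat :: "('o,'m,'x) precat_scheme \<Rightarrow> ('o,'m) precat" where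
  "op_cat C = \<lparr>Obj = Obj C, Hom = (\<lambda>a b. Hom C b a), comp = (\<lambda>g f. comp C f g), idm = idm C,
     madd = madd C, mzero = (\<lambda>a b. mzero C b a), mneg = mneg C\<rparr>"

lemma op_cat_simps [simp]:
  "Obj (op_cat C) = Obj C" "Hom (op_cat C) a b = Hom C b a" "comp (op_cat C) g f = comp C f g"
  "idm (op_cat C) = idm C" "madd (op_cat C) = madd C" "mzero (op_cat C) a b = mzero C b a"
  "mneg (op_cat C) = mneg C"
  by (simp_all add: op_cat_def)

lemma preadditive_op_cat:
  assumes "preadditive C"
  shows "preadditive (op_cat C)"
proof -
  interpret preadditive_cat C by standard fact
  show ?thesis
    unfolding preadditive_def category_def
    by (intro conjI ballI; simp add: id_hom comp_hom comp_id_left comp_id_right comp_assoc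
        mzero_hom madd_hom mneg_hom madd_assoc madd_mzero_right madd_mneg_right madd_comp comp_madd;
        rule madd_commute)
qed

lemma hsum_op_cat: "hsum (op_cat C) a b \<phi> n = hsum C b a \<phi> n"
  by (induction n) simp_all

lemma is_dsum_op_cat: "is_dsum C X A n \<iota> \<pi> \<Longrightarrow> is_dsum (op_cat C) X A n \<pi> \<iota>"
  unfolding is_dsum_def by (simp add: hsum_op_cat)

lemma biprod_op_cat: "biprod C X A B i p j q \<Longrightarrow> biprod (op_cat C) X A B p i q j"
  by (simp add: biprod_def)

lemma direct_factor_op_cat:
  assumes "direct_factor C M X"
  shows "direct_factor (op_cat C) M X"
proof -
  obtain N i p j q where "biprod C X M N i p j q"
    using assms unfolding direct_factor_def by blast
  then have "biprod (op_cat C) X M N p i q j"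
    by (rule biprod_op_cat)
  then show ?thesis
    unfolding direct_factor_def by blast
qed

lemma in_add_im_op_cat:
  assumes "in_add_im D C F M"
  shows "in_add_im (op_cat D) (op_cat C) F M"
proof -
  obtain n L X \<iota> \<pi> where "\<forall>k<n. L k \<in> Obj D" "is_dsum C X (\<lambda>k. fo F (L k)) n \<iota> \<pi>"
    "direct_factor C M X"
    using assms unfolding in_add_im_def by blast
  then show ?thesis
    unfolding in_add_im_def using is_dsum_op_cat direct_factor_op_cat op_cat_simps(1) by metis
qed

lemma is_functor_op_cat: "is_functor C D F \<Longrightarrow> is_functor (op_cat C) (op_cat D) F"
  unfolding is_functor_def by simp

text \<open>The counit of F \<stileturn> G becomes the unit of G \<stileturn> F between the opposite categories, and vice versa.\<close>
lemma adjunction_op_cat: "adjunction C D F G \<Longrightarrow> adjunction (op_cat D) (op_cat C) G F"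
  unfolding adjunction_def by (elim conjE exE) (intro conjI is_functor_op_cat exI; simp; blast)

lemma rel_injective_iff_rel_projective_op_cat:
  "rel_injective C F Q \<longleftrightarrow> rel_projective (op_cat C) F Q"
  by (simp add: rel_injective_def rel_projective_def)

section \<open>Relative projectivity of objects in add(im S)\<close>

lemma rel_projective_retract:
  assumes "category C" and F: "is_functor C D F"
    and M: "M \<in> Obj C" and X: "X \<in> Obj C"
    and i: "i \<in> Hom C M X" and p: "p \<in> Hom C X M" and pi: "comp C p i = idm C M"
    and X_proj: "rel_projective C F X"
  shows "rel_projective C F M"
  unfolding rel_projective_def
proof (intro ballI inj_onI)
  interpret cat C by standard fact
  fix Y f f' assume Y: "Y \<in> Obj C" and f: "f \<in> Hom C M Y" and f': "f' \<in> Hom C M Y"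
    and eq: "fm F f = fm F f'"
  have "fm F (comp C f p) = fm F (comp C f' p)"
    using functor_comp [OF F X M Y p f] functor_comp [OF F X M Y p f'] eq by simp
  then have fp: "comp C f p = comp C f' p"
    using X_proj Y comp_hom [OF X M Y p f] comp_hom [OF X M Y p f']
    unfolding rel_projective_def inj_on_def by blast
  have "f = comp C (comp C f p) i"
    using comp_assoc [OF M X M Y i p f] comp_id_right [OF M Y f] by (simp add: pi)
  also have "\<dots> = f'"
    using comp_assoc [OF M X M Y i p f'] comp_id_right [OF M Y f'] by (simp add: pi fp)
  finally show "f = f'" .
qed

lemma rel_projective_dsum:
  assumes "preadditive C" and F: "is_functor C D F"
    and ds: "is_dsum C X A n \<iota> \<pi>" and summands_proj: "\<forall>k<n. rel_projective C F (A k)"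
  shows "rel_projective C F X"
  unfolding rel_projective_def
proof (intro ballI inj_onI)
  interpret preadditive_cat C by standard fact
  have X: "X \<in> Obj C" and summands: "\<forall>k<n. A k \<in> Obj C \<and> \<iota> k \<in> Hom C (A k) X"
    using ds unfolding is_dsum_def by auto
  fix Y g g' assume Y: "Y \<in> Obj C" and g: "g \<in> Hom C X Y" and g': "g' \<in> Hom C X Y"
    and eq: "fm F g = fm F g'"
  have "comp C g (\<iota> k) = comp C g' (\<iota> k)" if k: "k < n" for k
  proof -
    have Ak: "A k \<in> Obj C" and \<iota>k: "\<iota> k \<in> Hom C (A k) X"
      using summands k by auto
    have "fm F (comp C g (\<iota> k)) = fm F (comp C g' (\<iota> k))"
      using functor_comp [OF F Ak X Y \<iota>k g] functor_comp [OF F Ak X Y \<iota>k g'] eq by simp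
    then show ?thesis
      using summands_proj k Y comp_hom [OF Ak X Y \<iota>k g] comp_hom [OF Ak X Y \<iota>k g']
      unfolding rel_projective_def inj_on_def by blast
  qed
  then show "g = g'"
    by (intro dsum_hom_ext [OF ds Y g g']) blast
qed

text \<open>A morphism \<psi> out of S L is recovered from T \<psi> as \<epsilon> \<circ> S (T \<psi>) \<circ> S \<eta>.\<close>
lemma rel_projective_left_adjoint_image:
  assumes adj: "adjunction D C S T" and "category C" and L: "L \<in> Obj D"
  shows "rel_projective C T (fo S L)"
proof -
  interpret cat C by standard fact
  obtain \<eta> \<epsilon> where S: "is_functor D C S" and T: "is_functor C D T"
    and \<eta>: "\<forall>X\<in>Obj D. \<eta> X \<in> Hom D X (fo T (fo S X))"
    and \<epsilon>: "\<forall>Y\<in>Obj C. \<epsilon> Y \<in> Hom C (fo S (fo T Y)) Y"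
    and \<epsilon>_natural: "\<forall>X\<in>Obj C. \<forall>Y\<in>Obj C. \<forall>g\<in>Hom C X Y. comp C g (\<epsilon> X) = comp C (\<epsilon> Y) (fm S (fm T g))"
    and triangle: "\<forall>X\<in>Obj D. comp C (\<epsilon> (fo S X)) (fm S (\<eta> X)) = idm C (fo S X)"
    using adjunctionE [OF adj] by metis
  have SL: "fo S L \<in> Obj C" and TSL: "fo T (fo S L) \<in> Obj D" and STSL: "fo S (fo T (fo S L)) \<in> Obj C"
    using L functor_obj [OF S] functor_obj [OF T] by blast+
  have \<eta>L: "fm S (\<eta> L) \<in> Hom C (fo S L) (fo S (fo T (fo S L)))"
    using \<eta> L functor_hom [OF S L TSL] by blast
  have recover: "\<psi> = comp C (comp C (\<epsilon> Y) (fm S (fm T \<psi>))) (fm S (\<eta> L))"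
    if Y: "Y \<in> Obj C" and \<psi>: "\<psi> \<in> Hom C (fo S L) Y" for Y \<psi>
  proof -
    have "\<psi> = comp C \<psi> (comp C (\<epsilon> (fo S L)) (fm S (\<eta> L)))"
      using triangle L comp_id_right [OF SL Y \<psi>] by simp
    also have "\<dots> = comp C (comp C \<psi> (\<epsilon> (fo S L))) (fm S (\<eta> L))"
      using comp_assoc [OF SL STSL SL Y \<eta>L _ \<psi>] \<epsilon> SL by blast
    also have "\<dots> = comp C (comp C (\<epsilon> Y) (fm S (fm T \<psi>))) (fm S (\<eta> L))"
      using \<epsilon>_natural SL Y \<psi> by simp
    finally show ?thesis .
  qed
  show ?thesis
    unfolding rel_projective_def by (rule ballI, rule inj_onI) (metis recover)
qed

lemma direct_factor_imp_retract:
  assumes "direct_factor C M X"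
  obtains i p where "i \<in> Hom C M X" "p \<in> Hom C X M" "comp C p i = idm C M"
  using assms unfolding direct_factor_def biprod_def by blast

lemma in_add_im_imp_rel_projective:
  assumes pa: "preadditive C" and adj: "adjunction D C S T"
    and M: "M \<in> Obj C" and add: "in_add_im D C S M"
  shows "rel_projective C T M"
proof -
  interpret preadditive_cat C by standard (fact pa)
  have T: "is_functor C D T"
    using adj unfolding adjunction_def by blast
  obtain n L X \<iota> \<pi> where L: "\<forall>k<n. L k \<in> Obj D" and ds: "is_dsum C X (\<lambda>k. fo S (L k)) n \<iota> \<pi>"
    and df: "direct_factor C M X"
    using add unfolding in_add_im_def by blast
  have X: "X \<in> Obj C"
    using ds unfolding is_dsum_def by blast
  have "rel_projective C T X"
    using rel_projective_dsum [OF pa T ds] rel_projective_left_adjoint_image [OF adj category] L by blast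
  moreover obtain i p where "i \<in> Hom C M X" "p \<in> Hom C X M" "comp C p i = idm C M"
    using df by (rule direct_factor_imp_retract)
  ultimately show ?thesis
    using rel_projective_retract [OF category T M X] by blast
qed

lemma in_add_im_imp_rel_injective:
  assumes "preadditive C" and "adjunction C D T S"
    and "M \<in> Obj C" and "in_add_im D C S M"
  shows "rel_injective C T M"
  unfolding rel_injective_iff_rel_projective_op_cat
  using assms
  by (intro in_add_im_imp_rel_projective [where D = "op_cat D" and S = S]
      preadditive_op_cat adjunction_op_cat in_add_im_op_cat) simp_all

lemma direct_factor_imp_in_add_im:
  assumes "preadditive C" and S: "is_functor D C S"
    and L: "L \<in> Obj D" and df: "direct_factor C M (fo S L)"
  shows "in_add_im D C S M"
proof -
  interpret preadditive_cat C by standard fact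
  have SL: "fo S L \<in> Obj C"
    by (rule functor_obj [OF S L])
  have "is_dsum C (fo S L) (\<lambda>k. fo S ((\<lambda>_. L) k)) 1 (\<lambda>_. idm C (fo S L)) (\<lambda>_. idm C (fo S L))"
    unfolding is_dsum_def
    using SL id_hom [OF SL] comp_id_left [OF SL SL id_hom [OF SL]] madd_mzero_left [OF SL SL id_hom [OF SL]]
    by simp
  then show ?thesis
    unfolding in_add_im_def using L df by (intro exI conjI) auto
qed

section \<open>Triangulated categories\<close>

locale triangulated_cat =
  fixes C :: "('o,'m,'x) tricat_scheme"
  assumes triangulated: "triangulated C"

sublocale triangulated_cat \<subseteq> preadditive_cat
  using triangulated by unfold_locales (simp add: triangulated_def additive_def)

context triangulated_cat
begin

lemma zero_object: "\<exists>z\<in>Obj C. idm C z = mzero C z z"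
  using triangulated unfolding triangulated_def additive_def by blast

lemma shift_additive: "additive_functor C C (shiftF C)"
  using triangulated unfolding triangulated_def by (elim conjE) meson

lemma shift_functor: "is_functor C C (shiftF C)"
  using shift_additive by (simp add: additive_functor_def)

lemma shift_obj: "a \<in> Obj C \<Longrightarrow> shO C a \<in> Obj C"
  using functor_obj [OF shift_functor] by (simp add: shiftF_def)

lemma shift_hom: "\<lbrakk>a \<in> Obj C; b \<in> Obj C; f \<in> Hom C a b\<rbrakk> \<Longrightarrow> shM C f \<in> Hom C (shO C a) (shO C b)"
  using functor_hom [OF shift_functor] by (simp add: shiftF_def)

lemma shift_id: "a \<in> Obj C \<Longrightarrow> shM C (idm C a) = idm C (shO C a)"
  using functor_id [OF shift_functor] by (simp add: shiftF_def)

lemma shift_comp: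
  "\<lbrakk>a \<in> Obj C; b \<in> Obj C; c \<in> Obj C; f \<in> Hom C a b; g \<in> Hom C b c\<rbrakk>
    \<Longrightarrow> shM C (comp C g f) = comp C (shM C g) (shM C f)"
  using functor_comp [OF shift_functor] by (simp add: shiftF_def)

lemma shift_mzero: "\<lbrakk>a \<in> Obj C; b \<in> Obj C\<rbrakk> \<Longrightarrow> shM C (mzero C a b) = mzero C (shO C a) (shO C b)"
  using additive_functor_mzero [OF shift_additive preadditive preadditive] by (simp add: shiftF_def)

lemma shift_bij: "\<lbrakk>a \<in> Obj C; b \<in> Obj C\<rbrakk> \<Longrightarrow> bij_betw (shM C) (Hom C a b) (Hom C (shO C a) (shO C b))"
  using triangulated unfolding triangulated_def by (elim conjE) meson

lemma shift_inj: "\<lbrakk>a \<in> Obj C; b \<in> Obj C; f \<in> Hom C a b; g \<in> Hom C a b; shM C f = shM C g\<rbrakk> \<Longrightarrow> f = g"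
  using shift_bij by (metis bij_betw_def inj_onD)

lemma shift_surj:
  assumes "a \<in> Obj C" "b \<in> Obj C" "w \<in> Hom C (shO C a) (shO C b)"
  obtains t where "t \<in> Hom C a b" "w = shM C t"
  using shift_bij [OF assms(1,2)] assms(3) by (metis bij_betw_def imageE)

lemma shift_ess_surj: "b \<in> Obj C \<Longrightarrow> \<exists>a\<in>Obj C. \<exists>f. iso C f (shO C a) b"
  using triangulated unfolding triangulated_def by (elim conjE) meson

lemma dist_triangle:
  assumes "(X,Y,Z,f,g,h) \<in> dist C"
  shows "X \<in> Obj C" "Y \<in> Obj C" "Z \<in> Obj C"
    "f \<in> Hom C X Y" "g \<in> Hom C Y Z" "h \<in> Hom C Z (shO C X)"
  using assms triangulated unfolding triangulated_def is_triangle_def by fastforce+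

lemma dist_iso_closed:
  "\<lbrakk>(X,Y,Z,f,g,h) \<in> dist C; is_triangle C (X',Y',Z',f',g',h');
    iso C u X X'; iso C v Y Y'; iso C w Z Z';
    comp C v f = comp C f' u; comp C w g = comp C g' v; comp C (shM C u) h = comp C h' w\<rbrakk>
    \<Longrightarrow> (X',Y',Z',f',g',h') \<in> dist C"
  using triangulated unfolding triangulated_def by (elim conjE) meson

lemma dist_zero_cone:
  "\<lbrakk>X \<in> Obj C; z \<in> Obj C; idm C z = mzero C z z\<rbrakk>
    \<Longrightarrow> (X, X, z, idm C X, mzero C X z, mzero C z (shO C X)) \<in> dist C"
  using triangulated unfolding triangulated_def by (elim conjE) meson

lemma dist_complete: "\<lbrakk>X \<in> Obj C; Y \<in> Obj C; f \<in> Hom C X Y\<rbrakk> \<Longrightarrow> \<exists>Z g h. (X,Y,Z,f,g,h) \<in> dist C"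
  using triangulated unfolding triangulated_def by (elim conjE) meson

lemma dist_rotate_iff:
  "is_triangle C (X,Y,Z,f,g,h)
    \<Longrightarrow> (X,Y,Z,f,g,h) \<in> dist C \<longleftrightarrow> (Y, Z, shO C X, g, h, mneg C (shM C f)) \<in> dist C"
  using triangulated unfolding triangulated_def by (elim conjE) meson

lemma dist_fill:
  "\<lbrakk>(X,Y,Z,f,g,h) \<in> dist C; (X',Y',Z',f',g',h') \<in> dist C;
    u \<in> Hom C X X'; v \<in> Hom C Y Y'; comp C v f = comp C f' u\<rbrakk>
    \<Longrightarrow> \<exists>w\<in>Hom C Z Z'. comp C w g = comp C g' v \<and> comp C (shM C u) h = comp C h' w"
  using triangulated unfolding triangulated_def by (elim conjE) meson

lemma dist_rotate:
  assumes "(X,Y,Z,f,g,h) \<in> dist C"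
  shows "(Y, Z, shO C X, g, h, mneg C (shM C f)) \<in> dist C"
  using assms dist_rotate_iff dist_triangle [OF assms] by (simp add: is_triangle_def)

lemma dist_comp_zero:
  assumes d: "(X,Y,Z,f,g,h) \<in> dist C"
  shows "comp C g f = mzero C X Z"
proof -
  note T = dist_triangle [OF d]
  obtain z where z: "z \<in> Obj C" "idm C z = mzero C z z"
    using zero_object by blast
  obtain w where w: "w \<in> Hom C z Z" "comp C w (mzero C X z) = comp C g f"
    using dist_fill [OF dist_zero_cone [OF T(1) z] d id_hom [OF T(1)] T(4)] comp_id_right [OF T(1,2,4)]
    by auto
  then show ?thesis
    using comp_mzero [OF T(1) z(1) T(3)] by simp
qed

lemma dist_weak_kernel:
  assumes d: "(X,Y,Z,f,g,h) \<in> dist C"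
    and W: "W \<in> Obj C" and u: "u \<in> Hom C W Y" and gu: "comp C g u = mzero C W Z"
  obtains t where "t \<in> Hom C W X" "comp C f t = u"
proof -
  note T = dist_triangle [OF d]
  obtain z where z: "z \<in> Obj C" "idm C z = mzero C z z"
    using zero_object by blast
  have sW: "shO C W \<in> Obj C" and sX: "shO C X \<in> Obj C" and sY: "shO C Y \<in> Obj C"
    using W T(1,2) by (simp_all add: shift_obj)
  have "comp C (mzero C z Z) (mzero C W z) = comp C g u"
    using mzero_comp [OF W z(1) T(3) mzero_hom [OF W z(1)]] gu by simp
  then obtain w where w: "w \<in> Hom C (shO C W) (shO C X)"
    "comp C (shM C u) (mneg C (shM C (idm C W))) = comp C (mneg C (shM C f)) w"
    using dist_fill [OF dist_rotate [OF dist_zero_cone [OF W z]] dist_rotate [OF d] u mzero_hom [OF z(1) T(3)]]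
    by blast
  obtain t where t: "t \<in> Hom C W X" "w = shM C t"
    using shift_surj [OF W T(1) w(1)] by blast
  have ft: "comp C f t \<in> Hom C W Y"
    by (rule comp_hom [OF W T(1,2) t(1) T(4)])
  have "mneg C (shM C u) = comp C (shM C u) (mneg C (shM C (idm C W)))"
    using comp_mneg [OF sW sW sY id_hom [OF sW] shift_hom [OF W T(2) u]]
      comp_id_right [OF sW sY shift_hom [OF W T(2) u]] by (simp add: shift_id W)
  also have "\<dots> = mneg C (shM C (comp C f t))"
    using w(2) t(2) mneg_comp [OF sW sX sY shift_hom [OF W T(1) t(1)] shift_hom [OF T(1,2,4)]]
      shift_comp [OF W T(1,2) t(1) T(4)] by simp
  finally have "shM C u = shM C (comp C f t)"
    by (rule mneg_inj [OF sW sY shift_hom [OF W T(2) u] shift_hom [OF W T(2) ft]])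
  then have "comp C f t = u"
    using shift_inj [OF W T(2) u ft] by simp
  with t(1) show ?thesis
    by (rule that)
qed

lemma dist_weak_cokernel:
  assumes d: "(X,Y,Z,f,g,h) \<in> dist C"
    and W: "W \<in> Obj C" and u: "u \<in> Hom C Y W" and uf: "comp C u f = mzero C X W"
  obtains t where "t \<in> Hom C Z W" "comp C t g = u"
proof -
  note T = dist_triangle [OF d]
  obtain z where z: "z \<in> Obj C" "idm C z = mzero C z z"
    using zero_object by blast
  have sz: "shO C z \<in> Obj C" and sW: "shO C W \<in> Obj C"
    using z(1) W by (simp_all add: shift_obj)
  have "idm C (shO C z) = mzero C (shO C z) (shO C z)"
    using shift_id [OF z(1)] shift_mzero [OF z(1) z(1)] z(2) by simp
  then have cone: "(W, W, shO C z, idm C W, mzero C W (shO C z), mzero C (shO C z) (shO C W)) \<in> dist C"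
    by (rule dist_zero_cone [OF W sz])
  have "mneg C (shM C (mzero C z W)) = mzero C (shO C z) (shO C W)"
    using shift_mzero [OF z(1) W] mneg_mzero [OF sz sW] by simp
  moreover have "is_triangle C (z, W, W, mzero C z W, idm C W, mzero C W (shO C z))"
    unfolding is_triangle_def using z(1) W mzero_hom id_hom sz by simp
  ultimately have shifted_cone: "(z, W, W, mzero C z W, idm C W, mzero C W (shO C z)) \<in> dist C"
    using dist_rotate_iff cone by simp
  have "comp C u f = comp C (mzero C z W) (mzero C X z)"
    using uf mzero_comp [OF T(1) z(1) W mzero_hom [OF T(1) z(1)]] by simp
  then obtain t where "t \<in> Hom C Z W" "comp C t g = comp C (idm C W) u"
    using dist_fill [OF d shifted_cone mzero_hom [OF T(1) z(1)] u] by blast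
  then show ?thesis
    using comp_id_left [OF T(2) W u] that by simp
qed

lemma dist_iso_third:
  assumes d: "(X,Y,Z,f,g,h) \<in> dist C" and Z': "Z' \<in> Obj C"
    and \<phi>: "\<phi> \<in> Hom C Z' Z" and \<psi>: "\<psi> \<in> Hom C Z Z'"
    and \<psi>\<phi>: "comp C \<psi> \<phi> = idm C Z'" and \<phi>\<psi>: "comp C \<phi> \<psi> = idm C Z"
  shows "(X, Y, Z', f, comp C \<psi> g, comp C h \<phi>) \<in> dist C"
proof (rule dist_iso_closed [OF d _ iso_id iso_id])
  note T = dist_triangle [OF d]
  have sX: "shO C X \<in> Obj C"
    by (rule shift_obj [OF T(1)])
  show "is_triangle C (X, Y, Z', f, comp C \<psi> g, comp C h \<phi>)"
    unfolding is_triangle_def using T Z' sX comp_hom [OF T(2,3) Z' T(5) \<psi>] comp_hom [OF Z' T(3) sX \<phi> T(6)]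
    by simp
  show "iso C \<psi> Z Z'"
    unfolding iso_def using \<phi> \<psi> \<psi>\<phi> \<phi>\<psi> by blast
  show "comp C (idm C Y) f = comp C f (idm C X)"
    using comp_id_left [OF T(1,2,4)] comp_id_right [OF T(1,2,4)] by simp
  show "comp C \<psi> g = comp C (comp C \<psi> g) (idm C Y)"
    using comp_id_right [OF T(2) Z' comp_hom [OF T(2,3) Z' T(5) \<psi>]] by simp
  have "comp C (comp C h \<phi>) \<psi> = h"
    using comp_assoc [OF T(3) Z' T(3) sX \<psi> \<phi> T(6)] comp_id_right [OF T(3) sX T(6)] by (simp add: \<phi>\<psi>)
  then show "comp C (shM C (idm C X)) h = comp C (comp C h \<phi>) \<psi>"
    using comp_id_left [OF T(3) sX T(6)] by (simp add: shift_id T(1))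
qed (use dist_triangle [OF d] in simp_all)

lemma dist_extend_left:
  assumes X: "X \<in> Obj C" and Y: "Y \<in> Obj C" and f: "f \<in> Hom C X Y"
  obtains W k h where "(W,X,Y,k,f,h) \<in> dist C"
proof -
  obtain Z g h where d: "(X,Y,Z,f,g,h) \<in> dist C"
    using dist_complete [OF X Y f] by blast
  note T = dist_triangle [OF d]
  obtain a \<phi> where a: "a \<in> Obj C" and "iso C \<phi> (shO C a) Z"
    using shift_ess_surj [OF T(3)] by blast
  then obtain \<psi> where \<phi>: "\<phi> \<in> Hom C (shO C a) Z" and \<psi>: "\<psi> \<in> Hom C Z (shO C a)"
    and "comp C \<psi> \<phi> = idm C (shO C a)" "comp C \<phi> \<psi> = idm C Z"
    unfolding iso_def by blast
  then have d': "(X, Y, shO C a, f, comp C \<psi> g, comp C h \<phi>) \<in> dist C"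
    using dist_iso_third [OF d shift_obj [OF a]] by blast
  have sa: "shO C a \<in> Obj C" and sX: "shO C X \<in> Obj C"
    using a X by (simp_all add: shift_obj)
  have h\<phi>: "comp C h \<phi> \<in> Hom C (shO C a) (shO C X)"
    by (rule comp_hom [OF sa T(3) sX \<phi> T(6)])
  obtain k where k: "k \<in> Hom C a X" "mneg C (comp C h \<phi>) = shM C k"
    using shift_surj [OF a X mneg_hom [OF sa sX h\<phi>]] by blast
  have "is_triangle C (a, X, Y, k, f, comp C \<psi> g)"
    unfolding is_triangle_def using a X Y k(1) f comp_hom [OF Y T(3) sa T(5) \<psi>] by simp
  moreover have "mneg C (shM C k) = comp C h \<phi>"
    using k(2) mneg_mneg [OF sa sX h\<phi>] by simp
  ultimately have "(a, X, Y, k, f, comp C \<psi> g) \<in> dist C"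
    using dist_rotate_iff d' by simp
  then show ?thesis
    by (rule that)
qed

lemma dist_split_mono_third_zero:
  assumes d: "(M,X,N,s,g,h) \<in> dist C"
    and p: "p \<in> Hom C X M" and ps: "comp C p s = idm C M"
  shows "h = mzero C N (shO C M)"
proof -
  note T = dist_triangle [OF d]
  have sM: "shO C M \<in> Obj C" and sX: "shO C X \<in> Obj C"
    using T(1,2) by (simp_all add: shift_obj)
  have ss: "shM C s \<in> Hom C (shO C M) (shO C X)" and sp: "shM C p \<in> Hom C (shO C X) (shO C M)"
    using shift_hom T(1,2,4) p by blast+
  have "mneg C (comp C (shM C s) h) = mzero C N (shO C X)"
    using dist_comp_zero [OF dist_rotate [OF dist_rotate [OF d]]] mneg_comp [OF T(3) sM sX T(6) ss] by simp
  then have sh: "comp C (shM C s) h = mzero C N (shO C X)"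
    using mneg_eq_mzero_iff [OF T(3) sX comp_hom [OF T(3) sM sX T(6) ss]] by simp
  have "h = comp C (shM C (comp C p s)) h"
    using comp_id_left [OF T(3) sM T(6)] by (simp add: ps shift_id T(1))
  also have "\<dots> = comp C (shM C p) (comp C (shM C s) h)"
    using shift_comp [OF T(1,2,1) T(4) p] comp_assoc [OF T(3) sM sX sM T(6) ss sp] by simp
  also have "\<dots> = mzero C N (shO C M)"
    using comp_mzero [OF T(3) sX sM sp] by (simp add: sh)
  finally show ?thesis .
qed

text \<open>Complete s to a triangle M \<rightarrow> X \<rightarrow> N \<rightarrow> \<Sigma>M: its third map vanishes, so g has a section j,
  and the idempotent id - j g factors through s, giving the projection of the biproduct.\<close>
lemma split_mono_direct_factor:
  assumes M: "M \<in> Obj C" and X: "X \<in> Obj C"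
    and s: "s \<in> Hom C M X" and p: "p \<in> Hom C X M" and ps: "comp C p s = idm C M"
  shows "direct_factor C M X"
proof -
  obtain N g h where d: "(M,X,N,s,g,h) \<in> dist C"
    using dist_complete [OF M X s] by blast
  note T = dist_triangle [OF d]
  have "comp C h (idm C N) = mzero C N (shO C M)"
    using comp_id_right [OF T(3) shift_obj [OF M] T(6)] dist_split_mono_third_zero [OF d p ps] by simp
  then obtain j where j: "j \<in> Hom C N X" "comp C g j = idm C N"
    using dist_weak_kernel [OF dist_rotate [OF d] T(3) id_hom [OF T(3)]] by blast
  have jg: "comp C j g \<in> Hom C X X"
    by (rule comp_hom [OF X T(3) X T(5) j(1)])
  define e where "e = madd C (idm C X) (mneg C (comp C j g))"
  have e: "e \<in> Hom C X X"
    unfolding e_def by (rule madd_hom [OF X X id_hom [OF X] mneg_hom [OF X X jg]])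
  have "comp C g e = madd C g (mneg C (comp C (comp C g j) g))"
    unfolding e_def
    using comp_madd [OF X X T(3) id_hom [OF X] mneg_hom [OF X X jg] T(5)] comp_id_right [OF X T(3) T(5)]
      comp_mneg [OF X X T(3) jg T(5)] comp_assoc [OF X T(3) X T(3) T(5) j(1) T(5)] by simp
  also have "\<dots> = mzero C X N"
    using comp_id_left [OF X T(3) T(5)] madd_mneg_right [OF X T(3) T(5)] by (simp add: j(2))
  finally obtain r where r: "r \<in> Hom C X M" "comp C s r = e"
    using dist_weak_kernel [OF d X e] by blast
  have "madd C (comp C s r) (comp C j g) = idm C X"
    unfolding r(2) e_def by (rule madd_mneg_cancel [OF X X id_hom [OF X] jg])
  then show ?thesis
    unfolding direct_factor_def
    using biprodI_split_mono [OF X M T(3) s p ps r(1) j(1) T(5) j(2) dist_comp_zero [OF d]] by blast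
qed

text \<open>The map g completing e to a triangle satisfies T g \<circ> T e = 0, hence T g = 0 since T e is
  split, hence g = 0 by relative projectivity; so the identity of M factors through the weak kernel e.\<close>
lemma rel_projective_split_epi:
  assumes T: "additive_functor C D T" and "preadditive D"
    and M: "M \<in> Obj C" and X: "X \<in> Obj C" and proj: "rel_projective C T M"
    and e: "e \<in> Hom C X M" and r: "r \<in> Hom D (fo T M) (fo T X)"
    and Te_r: "comp D (fm T e) r = idm D (fo T M)"
  obtains s where "s \<in> Hom C M X" "comp C e s = idm C M"
proof -
  interpret D: preadditive_cat D by standard fact
  have T': "is_functor C D T"
    using T by (simp add: additive_functor_def)
  obtain Z g h where d: "(X,M,Z,e,g,h) \<in> dist C"
    using dist_complete [OF X M e] by blast
  note Tr = dist_triangle [OF d]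
  have TX: "fo T X \<in> Obj D" and TM: "fo T M \<in> Obj D" and TZ: "fo T Z \<in> Obj D"
    using functor_obj [OF T'] X M Tr(3) by blast+
  have Te: "fm T e \<in> Hom D (fo T X) (fo T M)" and Tg: "fm T g \<in> Hom D (fo T M) (fo T Z)"
    using functor_hom [OF T'] X M Tr(3) e Tr(5) by blast+
  have "fm T g = comp D (comp D (fm T g) (fm T e)) r"
    using D.comp_assoc [OF TM TX TM TZ r Te Tg] D.comp_id_right [OF TM TZ Tg] by (simp add: Te_r)
  also have "\<dots> = mzero D (fo T M) (fo T Z)"
    using functor_comp [OF T' X M Tr(3) e Tr(5)] dist_comp_zero [OF d]
      additive_functor_mzero [OF T preadditive \<open>preadditive D\<close> X Tr(3)] D.mzero_comp [OF TM TX TZ r]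
    by simp
  also have "\<dots> = fm T (mzero C M Z)"
    using additive_functor_mzero [OF T preadditive \<open>preadditive D\<close> M Tr(3)] by simp
  finally have "g = mzero C M Z"
    using proj Tr(3,5) mzero_hom [OF M Tr(3)] unfolding rel_projective_def inj_on_def by blast
  then have "comp C g (idm C M) = mzero C M Z"
    using comp_id_right [OF M Tr(3,5)] by simp
  then show ?thesis
    using dist_weak_kernel [OF d M id_hom [OF M]] that by blast
qed

lemma rel_injective_split_mono:
  assumes T: "additive_functor C D T" and "preadditive D"
    and M: "M \<in> Obj C" and X: "X \<in> Obj C" and inj: "rel_injective C T M"
    and e: "e \<in> Hom C M X" and l: "l \<in> Hom D (fo T X) (fo T M)"
    and l_Te: "comp D l (fm T e) = idm D (fo T M)"
  obtains t where "t \<in> Hom C X M" "comp C t e = idm C M"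
proof -
  interpret D: preadditive_cat D by standard fact
  have T': "is_functor C D T"
    using T by (simp add: additive_functor_def)
  obtain W k h where d: "(W,M,X,k,e,h) \<in> dist C"
    using dist_extend_left [OF M X e] by blast
  note Tr = dist_triangle [OF d]
  have TX: "fo T X \<in> Obj D" and TM: "fo T M \<in> Obj D" and TW: "fo T W \<in> Obj D"
    using functor_obj [OF T'] X M Tr(1) by blast+
  have Te: "fm T e \<in> Hom D (fo T M) (fo T X)" and Tk: "fm T k \<in> Hom D (fo T W) (fo T M)"
    using functor_hom [OF T'] X M Tr(1) e Tr(4) by blast+
  have "fm T k = comp D l (comp D (fm T e) (fm T k))"
    using D.comp_assoc [OF TW TM TX TM Tk Te l] D.comp_id_left [OF TW TM Tk] by (simp add: l_Te)
  also have "\<dots> = mzero D (fo T W) (fo T M)"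
    using functor_comp [OF T' Tr(1) M X Tr(4) e] dist_comp_zero [OF d]
      additive_functor_mzero [OF T preadditive \<open>preadditive D\<close> Tr(1) X] D.comp_mzero [OF TW TX TM l]
    by simp
  also have "\<dots> = fm T (mzero C W M)"
    using additive_functor_mzero [OF T preadditive \<open>preadditive D\<close> Tr(1) M] by simp
  finally have "k = mzero C W M"
    using inj Tr(1,4) mzero_hom [OF Tr(1) M] unfolding rel_injective_def inj_on_def by blast
  then have "comp C (idm C M) k = mzero C W M"
    using comp_id_left [OF Tr(1) M Tr(4)] by simp
  then show ?thesis
    using dist_weak_cokernel [OF d M id_hom [OF M]] that by blast
qed

lemma rel_projective_imp_direct_factor:
  assumes T: "additive_functor C D T" and "preadditive D" and adj: "adjunction D C S T"
    and M: "M \<in> Obj C" and proj: "rel_projective C T M"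
  shows "direct_factor C M (fo S (fo T M))"
proof -
  obtain \<eta> \<epsilon> where S: "is_functor D C S" and T': "is_functor C D T"
    and \<eta>: "\<forall>X\<in>Obj D. \<eta> X \<in> Hom D X (fo T (fo S X))"
    and \<epsilon>: "\<forall>Y\<in>Obj C. \<epsilon> Y \<in> Hom C (fo S (fo T Y)) Y"
    and triangle: "\<forall>Y\<in>Obj C. comp D (fm T (\<epsilon> Y)) (\<eta> (fo T Y)) = idm D (fo T Y)"
    using adjunctionE [OF adj] by metis
  have TM: "fo T M \<in> Obj D" and STM: "fo S (fo T M) \<in> Obj C"
    using functor_obj [OF T'] functor_obj [OF S] M by blast+
  obtain s where "s \<in> Hom C M (fo S (fo T M))" "comp C (\<epsilon> M) s = idm C M"
    using rel_projective_split_epi [OF T \<open>preadditive D\<close> M STM proj] \<epsilon> \<eta> triangle M TM by blast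
  then show ?thesis
    using split_mono_direct_factor [OF M STM] \<epsilon> M by blast
qed

lemma rel_injective_imp_direct_factor:
  assumes T: "additive_functor C D T" and "preadditive D" and adj: "adjunction C D T S"
    and M: "M \<in> Obj C" and inj: "rel_injective C T M"
  shows "direct_factor C M (fo S (fo T M))"
proof -
  obtain \<eta> \<epsilon> where T': "is_functor C D T" and S: "is_functor D C S"
    and \<eta>: "\<forall>X\<in>Obj C. \<eta> X \<in> Hom C X (fo S (fo T X))"
    and \<epsilon>: "\<forall>Y\<in>Obj D. \<epsilon> Y \<in> Hom D (fo T (fo S Y)) Y"
    and triangle: "\<forall>X\<in>Obj C. comp D (\<epsilon> (fo T X)) (fm T (\<eta> X)) = idm D (fo T X)"
    using adjunctionE [OF adj] by metis
  have TM: "fo T M \<in> Obj D" and STM: "fo S (fo T M) \<in> Obj C"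
    using functor_obj [OF T'] functor_obj [OF S] M by blast+
  obtain t where "t \<in> Hom C (fo S (fo T M)) M" "comp C t (\<eta> M) = idm C M"
    using rel_injective_split_mono [OF T \<open>preadditive D\<close> M STM inj] \<epsilon> \<eta> triangle M TM by blast
  then show ?thesis
    using split_mono_direct_factor [OF M STM] \<eta> M by blast
qed

end

theorem proposition2p10:
  fixes SC :: "('a,'b) tricat" and TC :: "('c,'d) tricat"
    and T :: "('a,'b,'c,'d) fnct" and S :: "('c,'d,'a,'b) fnct" and M :: 'a
  assumes "triangulated SC" and "triangulated TC"
    and "triangle_functor SC TC T"
    and "M \<in> Obj SC"
  shows "(adjunction TC SC S T \<longrightarrow>
            ((rel_projective SC T M \<longleftrightarrow> in_add_im TC SC S M) \<and>
             (in_add_im TC SC S M \<longleftrightarrow> (\<exists>L\<in>Obj TC. direct_factor SC M (fo S L))) \<and>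
             ((\<exists>L\<in>Obj TC. direct_factor SC M (fo S L)) \<longleftrightarrow>
                direct_factor SC M (fo S (fo T M)))))
       \<and> (adjunction SC TC T S \<longrightarrow>
            ((rel_injective SC T M \<longleftrightarrow> in_add_im TC SC S M) \<and>
             (in_add_im TC SC S M \<longleftrightarrow> (\<exists>L\<in>Obj TC. direct_factor SC M (fo S L))) \<and>
             ((\<exists>L\<in>Obj TC. direct_factor SC M (fo S L)) \<longleftrightarrow>
                direct_factor SC M (fo S (fo T M)))))"
proof -
  interpret SC: triangulated_cat SC by standard fact
  interpret TC: triangulated_cat TC by standard fact
  have T: "additive_functor SC TC T"
    using assms(3) by (simp add: triangle_functor_def)
  have TM: "fo T M \<in> Obj TC"
    using functor_obj assms(3,4) by (auto simp: triangle_functor_def additive_functor_def)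
  have S_functor: "adjunction TC SC S T \<or> adjunction SC TC T S \<Longrightarrow> is_functor TC SC S"
    unfolding adjunction_def by blast
  note proj_imp_factor = SC.rel_projective_imp_direct_factor [OF T TC.preadditive _ assms(4)]
    and inj_imp_factor = SC.rel_injective_imp_direct_factor [OF T TC.preadditive _ assms(4)]
    and add_imp_proj = in_add_im_imp_rel_projective [OF SC.preadditive _ assms(4)]
    and add_imp_inj = in_add_im_imp_rel_injective [OF SC.preadditive _ assms(4)]
    and factor_imp_add = direct_factor_imp_in_add_im [OF SC.preadditive S_functor]
  show ?thesis
    using proj_imp_factor inj_imp_factor add_imp_proj add_imp_inj factor_imp_add TM by blast
qed
end
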